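(* Let $S=(N,M_0)$ be a live H1S system. Then $S$ is reversible if and only if $S$ enables a T-sequence.
   Context: A Petri net is $N=(P,T,W)$ with finite disjoint sets $P$, $T$ and weights $W:(P\times T)\cup(T\times P)\to\mathbb{N}$; incidence matrix $I(p,t)=W(t,p)-W(p,t)$. Transition $t$ is enabled at $M$ if $M(p)\ge W(p,t)$ for all $p$; firing yields $M+I[\cdot,t]$. A system is live if for every transition $t$ and every reachable marking $M'$ some marking reachable from $M'$ enables $t$; it is reversible if $M_0$ is reachable from every marking reachable from $M_0$. A place is shared if it has at least two output transitions; an H1S net is a homogeneous net (for each place, all its output arc weights are equal) with at most one shared place. A T-sequence of $S$ is a firing sequence $\sigma$ feasible from $M_0$ containing every transition of $T$ and such that $I\cdot\mathbf{P}(\sigma)=0$, where $\mathbf{P}(\sigma)$ is its Parikh vector. *)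

theory Defs
  imports Main
begin

text \<open>A Petri net N = (P, T, W) is given by finite disjoint carrier sets P, T (disjoint
  automatically, being of different types) and weights split into
  Wpre p t = W(p,t) and Wpost t p = W(t,p). Markings are functions 'p => nat; only
  their values on P are affected by firing.\<close>

definition petri_net :: "'p set \<Rightarrow> 't set \<Rightarrow> bool" where
  "petri_net P T \<longleftrightarrow> finite P \<and> finite T"

definition incidence :: "('p \<Rightarrow> 't \<Rightarrow> nat) \<Rightarrow> ('t \<Rightarrow> 'p \<Rightarrow> nat) \<Rightarrow> 'p \<Rightarrow> 't \<Rightarrow> int" where
  "incidence Wpre Wpost p t = int (Wpost t p) - int (Wpre p t)"

definition enabled :: "'p set \<Rightarrow> ('p \<Rightarrow> 't \<Rightarrow> nat) \<Rightarrow> ('p \<Rightarrow> nat) \<Rightarrow> 't \<Rightarrow> bool" where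
  "enabled P Wpre M t \<longleftrightarrow> (\<forall>p\<in>P. M p \<ge> Wpre p t)"

definition fire :: "'p set \<Rightarrow> ('p \<Rightarrow> 't \<Rightarrow> nat) \<Rightarrow> ('t \<Rightarrow> 'p \<Rightarrow> nat) \<Rightarrow> ('p \<Rightarrow> nat) \<Rightarrow> 't \<Rightarrow> ('p \<Rightarrow> nat)" where
  "fire P Wpre Wpost M t = (\<lambda>p. if p \<in> P then M p - Wpre p t + Wpost t p else M p)"

fun fire_seq :: "'p set \<Rightarrow> 't set \<Rightarrow> ('p \<Rightarrow> 't \<Rightarrow> nat) \<Rightarrow> ('t \<Rightarrow> 'p \<Rightarrow> nat)
    \<Rightarrow> ('p \<Rightarrow> nat) \<Rightarrow> 't list \<Rightarrow> ('p \<Rightarrow> nat) option" where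
  "fire_seq P T Wpre Wpost M [] = Some M"
| "fire_seq P T Wpre Wpost M (t # \<sigma>) =
     (if t \<in> T \<and> enabled P Wpre M t
      then fire_seq P T Wpre Wpost (fire P Wpre Wpost M t) \<sigma> else None)"

definition reachable :: "'p set \<Rightarrow> 't set \<Rightarrow> ('p \<Rightarrow> 't \<Rightarrow> nat) \<Rightarrow> ('t \<Rightarrow> 'p \<Rightarrow> nat)
    \<Rightarrow> ('p \<Rightarrow> nat) \<Rightarrow> ('p \<Rightarrow> nat) \<Rightarrow> bool" where
  "reachable P T Wpre Wpost M M' \<longleftrightarrow> (\<exists>\<sigma>. fire_seq P T Wpre Wpost M \<sigma> = Some M')"

definition live :: "'p set \<Rightarrow> 't set \<Rightarrow> ('p \<Rightarrow> 't \<Rightarrow> nat) \<Rightarrow> ('t \<Rightarrow> 'p \<Rightarrow> nat)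
    \<Rightarrow> ('p \<Rightarrow> nat) \<Rightarrow> bool" where
  "live P T Wpre Wpost M0 \<longleftrightarrow>
     (\<forall>t\<in>T. \<forall>M'. reachable P T Wpre Wpost M0 M' \<longrightarrow>
        (\<exists>M''. reachable P T Wpre Wpost M' M'' \<and> enabled P Wpre M'' t))"

definition reversible :: "'p set \<Rightarrow> 't set \<Rightarrow> ('p \<Rightarrow> 't \<Rightarrow> nat) \<Rightarrow> ('t \<Rightarrow> 'p \<Rightarrow> nat)
    \<Rightarrow> ('p \<Rightarrow> nat) \<Rightarrow> bool" where
  "reversible P T Wpre Wpost M0 \<longleftrightarrow>
     (\<forall>M'. reachable P T Wpre Wpost M0 M' \<longrightarrow> reachable P T Wpre Wpost M' M0)"

definition output_transitions :: "'t set \<Rightarrow> ('p \<Rightarrow> 't \<Rightarrow> nat) \<Rightarrow> 'p \<Rightarrow> 't set" where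
  "output_transitions T Wpre p = {t \<in> T. Wpre p t > 0}"

definition shared_place :: "'t set \<Rightarrow> ('p \<Rightarrow> 't \<Rightarrow> nat) \<Rightarrow> 'p \<Rightarrow> bool" where
  "shared_place T Wpre p \<longleftrightarrow> card (output_transitions T Wpre p) \<ge> 2"

definition homogeneous :: "'p set \<Rightarrow> 't set \<Rightarrow> ('p \<Rightarrow> 't \<Rightarrow> nat) \<Rightarrow> bool" where
  "homogeneous P T Wpre \<longleftrightarrow>
     (\<forall>p\<in>P. \<forall>t1\<in>output_transitions T Wpre p. \<forall>t2\<in>output_transitions T Wpre p.
        Wpre p t1 = Wpre p t2)"

definition H1S :: "'p set \<Rightarrow> 't set \<Rightarrow> ('p \<Rightarrow> 't \<Rightarrow> nat) \<Rightarrow> bool" where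
  "H1S P T Wpre \<longleftrightarrow> homogeneous P T Wpre \<and> card {p \<in> P. shared_place T Wpre p} \<le> 1"

definition parikh :: "'t list \<Rightarrow> 't \<Rightarrow> nat" where
  "parikh \<sigma> t = count_list \<sigma> t"

definition T_sequence :: "'p set \<Rightarrow> 't set \<Rightarrow> ('p \<Rightarrow> 't \<Rightarrow> nat) \<Rightarrow> ('t \<Rightarrow> 'p \<Rightarrow> nat)
    \<Rightarrow> ('p \<Rightarrow> nat) \<Rightarrow> 't list \<Rightarrow> bool" where
  "T_sequence P T Wpre Wpost M0 \<sigma> \<longleftrightarrow>
     fire_seq P T Wpre Wpost M0 \<sigma> \<noteq> None \<and> T \<subseteq> set \<sigma> \<and>
     (\<forall>p\<in>P. (\<Sum>t\<in>T. incidence Wpre Wpost p t * int (parikh \<sigma> t)) = 0)"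

definition enables_T_sequence :: "'p set \<Rightarrow> 't set \<Rightarrow> ('p \<Rightarrow> 't \<Rightarrow> nat) \<Rightarrow> ('t \<Rightarrow> 'p \<Rightarrow> nat)
    \<Rightarrow> ('p \<Rightarrow> nat) \<Rightarrow> bool" where
  "enables_T_sequence P T Wpre Wpost M0 \<longleftrightarrow> (\<exists>\<sigma>. T_sequence P T Wpre Wpost M0 \<sigma>)"

end

(* A reversible live system has a T-sequence: fire every transition, which liveness allows,
   and return to M0; the Parikh vector of this cycle solves I x = 0.

   Conversely, a T-sequence is a cycle sigma at M0 containing every transition. A reachable
   marking is M = M0 + I Z, where the debt Z counts firings that M0 has not yet performed.
   Replay sigma from M: a transition with positive debt is skipped and its debt paid; one
   without debt is fired at M, after a prefix, found by liveness, that avoids all consumers of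
   the unique shared place. Such a prefix never lowers the tokens on unshared input places of
   v (their only consumer is v), and if it stops at an enabled consumer of the shared place,
   homogeneity says that place also suffices for v. So the debt of the shared consumers never
   grows and enough repetitions of sigma pay it off; from then on no prefixes are needed, the
   debt only shrinks, and further repetitions bring M back to M0. *)

theory Submission
  imports Defs
begin

text \<open>The state equation L = K + I Z; the firing counts Z need not be realizable.\<close>

definition state_eq :: "'p set \<Rightarrow> 't set \<Rightarrow> ('p \<Rightarrow> 't \<Rightarrow> nat) \<Rightarrow> ('t \<Rightarrow> 'p \<Rightarrow> nat)
    \<Rightarrow> ('p \<Rightarrow> nat) \<Rightarrow> ('p \<Rightarrow> nat) \<Rightarrow> ('t \<Rightarrow> nat) \<Rightarrow> bool" where
  "state_eq P T Wpre Wpost L K Z \<longleftrightarrow>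
     (\<forall>p\<in>P. int (L p) = int (K p) + (\<Sum>t\<in>T. incidence Wpre Wpost p t * int (Z t))) \<and>
     (\<forall>p. p \<notin> P \<longrightarrow> L p = K p)"

definition shared_consumers :: "'p set \<Rightarrow> 't set \<Rightarrow> ('p \<Rightarrow> 't \<Rightarrow> nat) \<Rightarrow> 't set" where
  "shared_consumers P T Wpre = {t\<in>T. \<exists>p\<in>P. shared_place T Wpre p \<and> 0 < Wpre p t}"

lemma fire_seq_append:
  "fire_seq P T Wpre Wpost M (\<alpha> @ \<beta>) =
     (case fire_seq P T Wpre Wpost M \<alpha> of None \<Rightarrow> None | Some M' \<Rightarrow> fire_seq P T Wpre Wpost M' \<beta>)"
  by (induction \<alpha> arbitrary: M) auto

lemma fire_seq_append_Some:
  assumes "fire_seq P T Wpre Wpost M (\<alpha> @ \<beta>) = Some M'"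
  obtains M1 where "fire_seq P T Wpre Wpost M \<alpha> = Some M1" "fire_seq P T Wpre Wpost M1 \<beta> = Some M'"
  using assms by (cases "fire_seq P T Wpre Wpost M \<alpha>") (simp_all add: fire_seq_append)

lemma fire_seq_Cons_Some:
  assumes "fire_seq P T Wpre Wpost M (t # \<sigma>) = Some M'"
  shows "t \<in> T" "enabled P Wpre M t" "fire_seq P T Wpre Wpost (fire P Wpre Wpost M t) \<sigma> = Some M'"
  using assms by (auto split: if_splits)

lemma fire_seq_snoc:
  assumes "fire_seq P T Wpre Wpost M \<sigma> = Some M'" "t \<in> T" "enabled P Wpre M' t"
  shows "fire_seq P T Wpre Wpost M (\<sigma> @ [t]) = Some (fire P Wpre Wpost M' t)"
  using assms by (simp add: fire_seq_append)

lemma fire_seq_cycle_replicate: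
  assumes "fire_seq P T Wpre Wpost M \<sigma> = Some M"
  shows "fire_seq P T Wpre Wpost M (concat (replicate k \<sigma>)) = Some M"
  using assms by (induction k) (simp_all add: fire_seq_append)

lemma reachable_refl: "reachable P T Wpre Wpost M M"
  unfolding reachable_def by (metis fire_seq.simps(1))

lemma reachable_trans:
  "reachable P T Wpre Wpost M1 M2 \<Longrightarrow> reachable P T Wpre Wpost M2 M3 \<Longrightarrow>
   reachable P T Wpre Wpost M1 M3"
  unfolding reachable_def by (metis fire_seq_append option.case(2))

lemma state_eq_refl: "state_eq P T Wpre Wpost M M (\<lambda>_. 0)"
  unfolding state_eq_def by simp

lemma state_eq_trans:
  assumes "state_eq P T Wpre Wpost A B X" "state_eq P T Wpre Wpost B K Y"
  shows "state_eq P T Wpre Wpost A K (\<lambda>u. X u + Y u)"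
  using assms unfolding state_eq_def by (auto simp: algebra_simps sum.distrib)

lemma state_eq_cancel:
  assumes "state_eq P T Wpre Wpost A K (\<lambda>u. X u + Y u)" "state_eq P T Wpre Wpost B K Y"
  shows "state_eq P T Wpre Wpost A B X"
  using assms unfolding state_eq_def by (auto simp: algebra_simps sum.distrib)

lemma state_eq_fire:
  assumes "finite T" "t \<in> T" "enabled P Wpre M t"
  shows "state_eq P T Wpre Wpost (fire P Wpre Wpost M t) M (count_list [t])"
proof -
  have "(\<Sum>u\<in>T. incidence Wpre Wpost p u * int (count_list [t] u)) = incidence Wpre Wpost p t" for p
    using assms(1,2) by (simp add: if_distrib sum.delta cong: if_cong)
  moreover have "int (fire P Wpre Wpost M t p) = int (M p) + incidence Wpre Wpost p t" if "p \<in> P" for p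
    using assms(3) that unfolding enabled_def fire_def incidence_def by auto
  ultimately show ?thesis unfolding state_eq_def fire_def by auto
qed

lemma fire_seq_state_eq:
  assumes "finite T" "fire_seq P T Wpre Wpost M \<sigma> = Some M'"
  shows "state_eq P T Wpre Wpost M' M (count_list \<sigma>)"
  using assms(2)
proof (induction \<sigma> arbitrary: M)
  case Nil
  then show ?case using state_eq_refl by simp
next
  case (Cons t \<sigma>)
  note step = fire_seq_Cons_Some[OF Cons.prems]
  have "state_eq P T Wpre Wpost M' M (\<lambda>u. count_list \<sigma> u + count_list [t] u)"
    using state_eq_trans[OF Cons.IH[OF step(3)] state_eq_fire[OF assms(1) step(1,2)]] .
  moreover have "(\<lambda>u. count_list \<sigma> u + count_list [t] u) = count_list (t # \<sigma>)"
    by auto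
  ultimately show ?case by metis
qed

lemma state_eq_zero_eq:
  assumes "state_eq P T Wpre Wpost L K Z" "\<forall>t\<in>T. Z t = 0"
  shows "L = K"
proof
  fix p show "L p = K p"
    using assms unfolding state_eq_def by (cases "p \<in> P") auto
qed

lemma state_eq_unconsumed_le:
  assumes "state_eq P T Wpre Wpost L K Z" "p \<in> P" "\<forall>u\<in>T. 0 < Z u \<longrightarrow> Wpre p u = 0"
  shows "K p \<le> L p"
proof -
  have "0 \<le> incidence Wpre Wpost p t * int (Z t)" if "t \<in> T" for t
    using assms(3) that by (cases "Z t = 0") (auto simp: incidence_def)
  then have "0 \<le> (\<Sum>t\<in>T. incidence Wpre Wpost p t * int (Z t))"
    by (simp add: sum_nonneg)
  then show ?thesis using assms(1,2) unfolding state_eq_def by auto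
qed

lemma unshared_place_output_unique:
  assumes "finite T" "\<not> shared_place T Wpre p"
    "u \<in> T" "0 < Wpre p u" "v \<in> T" "0 < Wpre p v"
  shows "u = v"
proof (rule ccontr)
  assume "u \<noteq> v"
  moreover have "{u, v} \<subseteq> output_transitions T Wpre p"
    using assms unfolding output_transitions_def by auto
  moreover have "finite (output_transitions T Wpre p)"
    using assms(1) unfolding output_transitions_def by auto
  ultimately have "2 \<le> card (output_transitions T Wpre p)"
    by (metis card_2_iff card_mono)
  then show False using assms(2) unfolding shared_place_def by simp
qed

lemma state_eq_unshared_le:
  assumes "finite T" "state_eq P T Wpre Wpost L K Z" "p \<in> P" "\<not> shared_place T Wpre p"
    "v \<in> T" "0 < Wpre p v" "Z v = 0"
  shows "K p \<le> L p"
proof (rule state_eq_unconsumed_le[OF assms(2,3)])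
  show "\<forall>u\<in>T. 0 < Z u \<longrightarrow> Wpre p u = 0"
    using unshared_place_output_unique[OF assms(1,4) _ _ assms(5,6)] assms(7)
    by (metis bot_nat_0.not_eq_extremum)
qed

text \<open>Unshared input places of v can only have lost tokens through v itself, so only the
  shared places can prevent L from enabling v.\<close>

lemma state_eq_enabled_if_shared_places_enabled:
  assumes "finite T" "state_eq P T Wpre Wpost L K Z" "v \<in> T" "enabled P Wpre K v" "Z v = 0"
    "\<forall>p\<in>P. shared_place T Wpre p \<longrightarrow> Wpre p v \<le> L p"
  shows "enabled P Wpre L v"
  unfolding enabled_def
proof
  fix p assume p: "p \<in> P"
  show "Wpre p v \<le> L p"
  proof (cases "shared_place T Wpre p \<or> Wpre p v = 0")
    case True
    then show ?thesis using assms(6) p by auto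
  next
    case False
    then have "K p \<le> L p" using state_eq_unshared_le[OF assms(1,2) p _ assms(3) _ assms(5)] by simp
    then show ?thesis using assms(4) p unfolding enabled_def by (meson le_trans)
  qed
qed

lemma H1S_shared_place_unique:
  assumes "finite P" "H1S P T Wpre" "p \<in> P" "q \<in> P" "shared_place T Wpre p" "shared_place T Wpre q"
  shows "p = q"
proof -
  have "finite {p\<in>P. shared_place T Wpre p}" using assms(1) by simp
  moreover have "card {p\<in>P. shared_place T Wpre p} \<le> Suc 0" using assms(2) unfolding H1S_def by simp
  ultimately have "\<forall>a\<in>{p\<in>P. shared_place T Wpre p}. \<forall>b\<in>{p\<in>P. shared_place T Wpre p}. a = b"
    using card_le_Suc0_iff_eq by blast
  then show ?thesis using assms(3-6) by blast
qed

lemma H1S_shared_consumer_bound: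
  assumes "finite P" "H1S P T Wpre" "q \<in> P" "shared_place T Wpre q" "v \<in> T" "0 < Wpre q v"
    "c \<in> shared_consumers P T Wpre" "enabled P Wpre L c"
  shows "Wpre q v \<le> L q"
proof -
  obtain q' where q': "q' \<in> P" "shared_place T Wpre q'" "0 < Wpre q' c" "c \<in> T"
    using assms(7) unfolding shared_consumers_def by auto
  with assms have "q' = q" using H1S_shared_place_unique by metis
  with q' assms(2,3,5,6) have "Wpre q c = Wpre q v"
    unfolding H1S_def homogeneous_def output_transitions_def by blast
  then show ?thesis using assms(3,8) unfolding enabled_def by metis
qed

lemma fire_seq_avoiding_prefix:
  assumes "fire_seq P T Wpre Wpost L \<xi> = Some M"
  obtains \<eta> L' where "fire_seq P T Wpre Wpost L \<eta> = Some L'" "set \<eta> \<inter> S = {}"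
    "L' = M \<or> (\<exists>c\<in>S. c \<in> T \<and> enabled P Wpre L' c)"
proof -
  define \<eta> where "\<eta> = takeWhile (\<lambda>u. u \<notin> S) \<xi>"
  define \<rho> where "\<rho> = dropWhile (\<lambda>u. u \<notin> S) \<xi>"
  have "fire_seq P T Wpre Wpost L (\<eta> @ \<rho>) = Some M"
    using assms unfolding \<eta>_def \<rho>_def by simp
  then obtain L' where L': "fire_seq P T Wpre Wpost L \<eta> = Some L'"
    "fire_seq P T Wpre Wpost L' \<rho> = Some M"
    by (rule fire_seq_append_Some)
  have "set \<eta> \<inter> S = {}" unfolding \<eta>_def by (auto dest: set_takeWhileD)
  moreover have "L' = M \<or> (\<exists>c\<in>S. c \<in> T \<and> enabled P Wpre L' c)"
  proof (cases \<rho>)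
    case Nil
    then show ?thesis using L'(2) by simp
  next
    case (Cons c \<rho>')
    then have "c \<in> S" using hd_dropWhile[of "\<lambda>u. u \<notin> S" \<xi>] unfolding \<rho>_def by auto
    moreover have "c \<in> T" "enabled P Wpre L' c"
      using fire_seq_Cons_Some(1,2)[OF L'(2)[unfolded Cons]] by auto
    ultimately show ?thesis by blast
  qed
  ultimately show thesis using that L'(1) by blast
qed

lemma live_covering_run:
  assumes "finite T" "live P T Wpre Wpost M0"
  obtains \<sigma> M where "fire_seq P T Wpre Wpost M0 \<sigma> = Some M" "T \<subseteq> set \<sigma>"
proof -
  have "finite S \<Longrightarrow> S \<subseteq> T \<Longrightarrow>
    \<exists>\<sigma> M. fire_seq P T Wpre Wpost M0 \<sigma> = Some M \<and> S \<subseteq> set \<sigma>" for S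
  proof (induction S rule: finite_induct)
    case empty
    then show ?case by (intro exI[of _ "[]"]) auto
  next
    case (insert t S)
    then obtain \<sigma> M where run: "fire_seq P T Wpre Wpost M0 \<sigma> = Some M" "S \<subseteq> set \<sigma>" by auto
    then obtain \<xi> M' where "fire_seq P T Wpre Wpost M \<xi> = Some M'" "enabled P Wpre M' t"
      using assms(2) insert.prems unfolding live_def reachable_def by blast
    then have "fire_seq P T Wpre Wpost M0 ((\<sigma> @ \<xi>) @ [t]) = Some (fire P Wpre Wpost M' t)"
      using run(1) insert.prems by (intro fire_seq_snoc) (auto simp: fire_seq_append)
    then show ?case using run(2) by fastforce
  qed
  then show thesis using that assms(1) by blast
qed

lemma reversible_live_imp_enables_T_sequence:
  assumes "finite T" "live P T Wpre Wpost M0" "reversible P T Wpre Wpost M0"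
  shows "enables_T_sequence P T Wpre Wpost M0"
proof -
  obtain \<sigma> M where run: "fire_seq P T Wpre Wpost M0 \<sigma> = Some M" "T \<subseteq> set \<sigma>"
    using live_covering_run[OF assms(1,2)] .
  then obtain \<rho> where "fire_seq P T Wpre Wpost M \<rho> = Some M0"
    using assms(3) unfolding reversible_def reachable_def by blast
  then have cyc: "fire_seq P T Wpre Wpost M0 (\<sigma> @ \<rho>) = Some M0"
    using run(1) by (simp add: fire_seq_append)
  then have "state_eq P T Wpre Wpost M0 M0 (count_list (\<sigma> @ \<rho>))"
    using fire_seq_state_eq[OF assms(1)] by blast
  then have "T_sequence P T Wpre Wpost M0 (\<sigma> @ \<rho>)"
    using cyc run(2) unfolding T_sequence_def state_eq_def parikh_def by auto
  then show ?thesis unfolding enables_T_sequence_def by blast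
qed

lemma T_sequence_cycle:
  assumes "finite T" "T_sequence P T Wpre Wpost M0 \<sigma>"
  shows "fire_seq P T Wpre Wpost M0 \<sigma> = Some M0"
proof -
  obtain M where run: "fire_seq P T Wpre Wpost M0 \<sigma> = Some M"
    using assms(2) unfolding T_sequence_def by auto
  have "state_eq P T Wpre Wpost M M0 (count_list \<sigma>)"
    using fire_seq_state_eq[OF assms(1) run] .
  then have "M = M0"
    using assms(2) unfolding T_sequence_def state_eq_def parikh_def by fastforce
  then show ?thesis using run by simp
qed

locale live_H1S_system =
  fixes P :: "'p set" and T :: "'t set" and Wpre :: "'p \<Rightarrow> 't \<Rightarrow> nat"
    and Wpost :: "'t \<Rightarrow> 'p \<Rightarrow> nat" and M0 :: "'p \<Rightarrow> nat"
  assumes finite_P: "finite P" and finite_T: "finite T" and H1S: "H1S P T Wpre"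
    and live: "live P T Wpre Wpost M0"
begin

lemma enable_avoiding_shared_consumers:
  assumes "v \<in> T" "enabled P Wpre K v" "Z v = 0" "state_eq P T Wpre Wpost L K Z"
    "reachable P T Wpre Wpost M0 L"
  obtains \<eta> L' where "fire_seq P T Wpre Wpost L \<eta> = Some L'"
    "set \<eta> \<inter> shared_consumers P T Wpre = {}" "enabled P Wpre L' v"
    "\<forall>t\<in>shared_consumers P T Wpre. Z t = 0 \<Longrightarrow> \<eta> = []"
proof -
  let ?C = "shared_consumers P T Wpre"
  have shared_enabled: "Wpre p v \<le> L p"
    if p: "p \<in> P" "shared_place T Wpre p" and "\<forall>t\<in>?C. Z t = 0" for p
  proof -
    have "\<forall>u\<in>T. 0 < Z u \<longrightarrow> Wpre p u = 0" using that unfolding shared_consumers_def by auto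
    then have "K p \<le> L p" using state_eq_unconsumed_le[OF assms(4) p(1)] by blast
    then show ?thesis using assms(2) p(1) unfolding enabled_def by (meson le_trans)
  qed
  show thesis
  proof (cases "enabled P Wpre L v")
    case True
    then show thesis using that[of "[]" L] by simp
  next
    case False
    then obtain p where p: "p \<in> P" "shared_place T Wpre p" "L p < Wpre p v"
      using state_eq_enabled_if_shared_places_enabled[OF finite_T assms(4,1,2,3)] by (meson not_le)
    then have "v \<in> ?C" using assms(1) unfolding shared_consumers_def by auto
    have debt: "\<not> (\<forall>t\<in>?C. Z t = 0)" using shared_enabled[OF p(1,2)] p(3) by (meson not_le)
    obtain \<xi> M where "fire_seq P T Wpre Wpost L \<xi> = Some M" "enabled P Wpre M v"
      using live assms(1,5) unfolding live_def reachable_def by blast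
    moreover obtain \<eta> L' where \<eta>: "fire_seq P T Wpre Wpost L \<eta> = Some L'" "set \<eta> \<inter> ?C = {}"
      "L' = M \<or> (\<exists>c\<in>?C. c \<in> T \<and> enabled P Wpre L' c)"
      using fire_seq_avoiding_prefix[OF \<open>fire_seq P T Wpre Wpost L \<xi> = Some M\<close>] by blast
    moreover have "enabled P Wpre L' v" if c: "c \<in> ?C" "enabled P Wpre L' c" for c
    proof (rule state_eq_enabled_if_shared_places_enabled[OF finite_T _ assms(1,2)])
      show "state_eq P T Wpre Wpost L' K (\<lambda>u. count_list \<eta> u + Z u)"
        using state_eq_trans[OF fire_seq_state_eq[OF finite_T \<eta>(1)] assms(4)] .
      show "count_list \<eta> v + Z v = 0" using \<open>v \<in> ?C\<close> \<eta>(2) assms(3) by (auto simp: count_list_0_iff)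
      show "\<forall>q\<in>P. shared_place T Wpre q \<longrightarrow> Wpre q v \<le> L' q"
        using H1S_shared_consumer_bound[OF finite_P H1S _ _ assms(1) _ c] by (metis not_gr0 zero_le)
    qed
    ultimately show thesis using that debt by blast
  qed
qed

text \<open>If Z v = 0 then Z(v := Z v - 1) = Z by truncated subtraction: this is the case in which
  v is fired at L.\<close>

lemma catch_up_step:
  assumes "v \<in> T" "enabled P Wpre K v" "state_eq P T Wpre Wpost L K Z"
    "reachable P T Wpre Wpost M0 L"
  obtains L' Z' where "reachable P T Wpre Wpost L L'"
    "state_eq P T Wpre Wpost L' (fire P Wpre Wpost K v) Z'"
    "\<forall>t\<in>shared_consumers P T Wpre. Z' t = (Z(v := Z v - 1)) t"
    "\<forall>t\<in>shared_consumers P T Wpre. Z t = 0 \<Longrightarrow> Z' = Z(v := Z v - 1)"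
proof (cases "Z v = 0")
  case False
  then have "(\<lambda>u. (Z(v := Z v - 1)) u + count_list [v] u) = Z" by (auto intro!: ext)
  then have "state_eq P T Wpre Wpost L (fire P Wpre Wpost K v) (Z(v := Z v - 1))"
    using state_eq_cancel[OF _ state_eq_fire[OF finite_T assms(1,2)]] assms(3) by metis
  then show thesis using that reachable_refl by blast
next
  case True
  then obtain \<eta> L1 where \<eta>: "fire_seq P T Wpre Wpost L \<eta> = Some L1"
    "set \<eta> \<inter> shared_consumers P T Wpre = {}" "enabled P Wpre L1 v"
    "\<forall>t\<in>shared_consumers P T Wpre. Z t = 0 \<Longrightarrow> \<eta> = []"
    using enable_avoiding_shared_consumers[OF assms(1,2) _ assms(3,4)] by blast
  define Z' where "Z' = (\<lambda>u. count_list \<eta> u + Z u)"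
  have run: "fire_seq P T Wpre Wpost L (\<eta> @ [v]) = Some (fire P Wpre Wpost L1 v)"
    using fire_seq_snoc[OF \<eta>(1) assms(1) \<eta>(3)] .
  have "state_eq P T Wpre Wpost (fire P Wpre Wpost L1 v) K (\<lambda>u. count_list (\<eta> @ [v]) u + Z u)"
    using state_eq_trans[OF fire_seq_state_eq[OF finite_T run] assms(3)] .
  moreover have "(\<lambda>u. count_list (\<eta> @ [v]) u + Z u) = (\<lambda>u. Z' u + count_list [v] u)"
    unfolding Z'_def by auto
  ultimately have "state_eq P T Wpre Wpost (fire P Wpre Wpost L1 v) (fire P Wpre Wpost K v) Z'"
    using state_eq_cancel[OF _ state_eq_fire[OF finite_T assms(1,2)]] by metis
  moreover have "reachable P T Wpre Wpost L (fire P Wpre Wpost L1 v)"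
    using run unfolding reachable_def by blast
  moreover have "\<forall>t\<in>shared_consumers P T Wpre. Z' t = (Z(v := Z v - 1)) t"
    using \<eta>(2) True unfolding Z'_def by (auto simp: count_list_0_iff)
  moreover have "Z' = Z(v := Z v - 1)" if "\<forall>t\<in>shared_consumers P T Wpre. Z t = 0"
    using \<eta>(4)[OF that] True unfolding Z'_def by auto
  ultimately show thesis using that by blast
qed

lemma catch_up:
  assumes "fire_seq P T Wpre Wpost K \<alpha> = Some K'" "reachable P T Wpre Wpost M0 L"
    "state_eq P T Wpre Wpost L K Z"
  shows "\<exists>L' Z'. reachable P T Wpre Wpost L L' \<and> state_eq P T Wpre Wpost L' K' Z' \<and>
    (\<forall>t\<in>shared_consumers P T Wpre. Z' t = Z t - count_list \<alpha> t) \<and>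
    ((\<forall>t\<in>shared_consumers P T Wpre. Z t = 0) \<longrightarrow> (\<forall>t. Z' t = Z t - count_list \<alpha> t))"
  using assms
proof (induction \<alpha> arbitrary: K L Z)
  case Nil
  then show ?case using reachable_refl by fastforce
next
  case (Cons v \<alpha>)
  note step = fire_seq_Cons_Some[OF Cons.prems(1)]
  obtain L1 Z1 where L1: "reachable P T Wpre Wpost L L1"
    "state_eq P T Wpre Wpost L1 (fire P Wpre Wpost K v) Z1"
    "\<forall>t\<in>shared_consumers P T Wpre. Z1 t = (Z(v := Z v - 1)) t"
    "\<forall>t\<in>shared_consumers P T Wpre. Z t = 0 \<Longrightarrow> Z1 = Z(v := Z v - 1)"
    using catch_up_step[OF step(1,2) Cons.prems(3,2)] by blast
  then obtain L2 Z2 where L2: "reachable P T Wpre Wpost L1 L2" "state_eq P T Wpre Wpost L2 K' Z2"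
    "\<forall>t\<in>shared_consumers P T Wpre. Z2 t = Z1 t - count_list \<alpha> t"
    "(\<forall>t\<in>shared_consumers P T Wpre. Z1 t = 0) \<longrightarrow> (\<forall>t. Z2 t = Z1 t - count_list \<alpha> t)"
    using Cons.IH[OF step(3) reachable_trans[OF Cons.prems(2)]] by blast
  have "reachable P T Wpre Wpost L L2" using reachable_trans L1(1) L2(1) by blast
  moreover have "\<forall>t\<in>shared_consumers P T Wpre. Z2 t = Z t - count_list (v # \<alpha>) t"
    using L1(3) L2(3) by auto
  moreover have "\<forall>t. Z2 t = Z t - count_list (v # \<alpha>) t"
    if "\<forall>t\<in>shared_consumers P T Wpre. Z t = 0"
    using L1(4)[OF that] L2(4) that by auto
  ultimately show ?case using L2(2) by blast
qed

lemma catch_up_cycle: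
  assumes "fire_seq P T Wpre Wpost M0 \<sigma> = Some M0" "T \<subseteq> set \<sigma>"
    "reachable P T Wpre Wpost M0 L" "state_eq P T Wpre Wpost L M0 Z"
  obtains L' Z' where "reachable P T Wpre Wpost L L'" "state_eq P T Wpre Wpost L' M0 Z'"
    "\<forall>t\<in>shared_consumers P T Wpre. Z' t = 0"
    "(\<forall>t\<in>shared_consumers P T Wpre. Z t = 0) \<longrightarrow> (\<forall>t\<in>T. Z' t = 0)"
proof -
  define k where "k = (\<Sum>t\<in>T. Z t)"
  define \<rho> where "\<rho> = concat (replicate k \<sigma>)"
  have "Z t \<le> count_list \<rho> t" if "t \<in> T" for t
  proof -
    have "Z t \<le> k" unfolding k_def using finite_T that by (intro member_le_sum) auto
    also have "k \<le> k * count_list \<sigma> t"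
      using assms(2) that count_list_0_iff[of \<sigma> t] by auto
    also have "\<dots> = count_list \<rho> t"
      unfolding \<rho>_def by (simp add: count_list_concat sum_list_replicate)
    finally show ?thesis .
  qed
  moreover have "shared_consumers P T Wpre \<subseteq> T" unfolding shared_consumers_def by auto
  moreover obtain L' Z' where "reachable P T Wpre Wpost L L'" "state_eq P T Wpre Wpost L' M0 Z'"
    "\<forall>t\<in>shared_consumers P T Wpre. Z' t = Z t - count_list \<rho> t"
    "(\<forall>t\<in>shared_consumers P T Wpre. Z t = 0) \<longrightarrow> (\<forall>t. Z' t = Z t - count_list \<rho> t)"
    using catch_up[OF fire_seq_cycle_replicate[OF assms(1)] assms(3,4)] unfolding \<rho>_def by blast
  ultimately show thesis using that by (metis diff_is_0_eq subsetD)
qed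

lemma cycle_imp_reversible:
  assumes "fire_seq P T Wpre Wpost M0 \<sigma> = Some M0" "T \<subseteq> set \<sigma>"
  shows "reversible P T Wpre Wpost M0"
  unfolding reversible_def
proof (intro allI impI)
  fix M assume M: "reachable P T Wpre Wpost M0 M"
  then obtain \<tau> where "fire_seq P T Wpre Wpost M0 \<tau> = Some M" unfolding reachable_def by blast
  then have \<tau>: "state_eq P T Wpre Wpost M M0 (count_list \<tau>)" by (rule fire_seq_state_eq[OF finite_T])
  obtain L1 Z1 where L1: "reachable P T Wpre Wpost M L1" "state_eq P T Wpre Wpost L1 M0 Z1"
    "\<forall>t\<in>shared_consumers P T Wpre. Z1 t = 0"
    by (rule catch_up_cycle[OF assms M \<tau>]) blast
  obtain L2 Z2 where L2: "reachable P T Wpre Wpost L1 L2" "state_eq P T Wpre Wpost L2 M0 Z2"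
    "\<forall>t\<in>shared_consumers P T Wpre. Z2 t = 0"
    "(\<forall>t\<in>shared_consumers P T Wpre. Z1 t = 0) \<longrightarrow> (\<forall>t\<in>T. Z2 t = 0)"
    by (rule catch_up_cycle[OF assms reachable_trans[OF M L1(1)] L1(2)])
  have "L2 = M0" using state_eq_zero_eq[OF L2(2) mp[OF L2(4) L1(3)]] .
  then show "reachable P T Wpre Wpost M M0" using reachable_trans L1(1) L2(1) by blast
qed

end

theorem mainTheorem9:
  fixes P :: "'p set" and T :: "'t set"
    and Wpre :: "'p \<Rightarrow> 't \<Rightarrow> nat" and Wpost :: "'t \<Rightarrow> 'p \<Rightarrow> nat"
    and M0 :: "'p \<Rightarrow> nat"
  assumes "petri_net P T"
    and "H1S P T Wpre"
    and "live P T Wpre Wpost M0"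
  shows "reversible P T Wpre Wpost M0 \<longleftrightarrow> enables_T_sequence P T Wpre Wpost M0"
proof -
  interpret live_H1S_system P T Wpre Wpost M0
    using assms by unfold_locales (auto simp: petri_net_def)
  show ?thesis
  proof
    assume "reversible P T Wpre Wpost M0"
    then show "enables_T_sequence P T Wpre Wpost M0"
      by (rule reversible_live_imp_enables_T_sequence[OF finite_T live])
  next
    assume "enables_T_sequence P T Wpre Wpost M0"
    then obtain \<sigma> where \<sigma>: "T_sequence P T Wpre Wpost M0 \<sigma>" unfolding enables_T_sequence_def ..
    then have "T \<subseteq> set \<sigma>" unfolding T_sequence_def by blast
    with T_sequence_cycle[OF finite_T \<sigma>] show "reversible P T Wpre Wpost M0"
      by (rule cycle_imp_reversible)
  qed
qed

end
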